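(* Let $G$ be a finite loopless graph (parallel edges allowed). There exist a maximal spanning forest $F$ of $G$ and an orientation $\mathcal{O}_1$ of $G$ such that, with the basis $B_{\mathcal{C}}$ built from $(F,\mathcal{O}_1)$, $\langle x_i,e_j\rangle\in\{0,1\}$ for all $x_i\in B_{\mathcal{C}}$ and $e_j\in E(G)$; and an orientation $\mathcal{O}_2$ such that, with the basis $B_{\mathcal{F}}$ built from $(F,\mathcal{O}_2)$, $\langle x_i,e_j\rangle\in\{0,1\}$ for all $x_i\in B_{\mathcal{F}}$ and $e_j\in E(G)$.
   Context: For an orientation $\mathcal{O}$, $C_1(G;\mathbb{Z})$ is the free abelian group on $E=\{e_1,\dots,e_n\}$, each $e_j$ taken with its $\mathcal{O}$-direction, $E$ orthonormal. Given a maximal spanning forest $F$: for $e_i\in E(F)$, $F\setminus e_i$ has components $K_1,K_2$ with $e_i$ directed from $K_1$ to $K_2$, and $x_i=\sum_j\epsilon_je_j$ over the edges $e_j$ between $K_1$ and $K_2$, $\epsilon_j=+1$ if $e_j$ is directed out of $K_1$ in $\mathcal{O}$, else $-1$; $B_{\mathcal{C}}=\{x_i:e_i\in E(F)\}$. For $e_i\notin E(F)$, $x_i=\sum_j\epsilon_je_j$ over the unique cycle in $F\cup e_i$, oriented cyclically so that $e_i$ keeps its $\mathcal{O}$-direction, $\epsilon_j=\pm1$ according as the cyclic and $\mathcal{O}$ directions agree or differ; $B_{\mathcal{F}}=\{x_i:e_i\notin E(F)\}$. *)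

theory Defs
  imports Main
begin

(* A finite loopless multigraph: vertex set V, edge set E (edge labels, so parallel
   edges are allowed), and inc e = set of the two distinct endpoints of e. *)
definition loopless_multigraph :: "'v set \<Rightarrow> 'e set \<Rightarrow> ('e \<Rightarrow> 'v set) \<Rightarrow> bool" where
  "loopless_multigraph V E inc \<longleftrightarrow> finite V \<and> finite E \<and>
     (\<forall>e\<in>E. inc e \<subseteq> V \<and> card (inc e) = 2)"

(* An orientation: each edge e gets a direction, from tail fst (Or e) to head snd (Or e). *)
definition orientation :: "'e set \<Rightarrow> ('e \<Rightarrow> 'v set) \<Rightarrow> ('e \<Rightarrow> 'v \<times> 'v) \<Rightarrow> bool" where
  "orientation E inc Or \<longleftrightarrow> (\<forall>e\<in>E. inc e = {fst (Or e), snd (Or e)})"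

fun is_walk :: "('e \<Rightarrow> 'v set) \<Rightarrow> 'e set \<Rightarrow> 'v \<Rightarrow> ('v \<times> 'e \<times> 'v) list \<Rightarrow> 'v \<Rightarrow> bool" where
  "is_walk inc S u [] w = (u = w)"
| "is_walk inc S u ((a, e, b) # p) w = (a = u \<and> e \<in> S \<and> inc e = {a, b} \<and> is_walk inc S b p w)"

definition is_path :: "('e \<Rightarrow> 'v set) \<Rightarrow> 'e set \<Rightarrow> 'v \<Rightarrow> ('v \<times> 'e \<times> 'v) list \<Rightarrow> 'v \<Rightarrow> bool" where
  "is_path inc S u p w \<longleftrightarrow> is_walk inc S u p w \<and> distinct (u # map (\<lambda>s. snd (snd s)) p)"

(* Cycles: nonempty closed walks with distinct edges and distinct vertices
   (a pair of parallel edges is a cycle of length 2). *)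
definition is_cycle :: "('e \<Rightarrow> 'v set) \<Rightarrow> 'e set \<Rightarrow> 'v \<Rightarrow> ('v \<times> 'e \<times> 'v) list \<Rightarrow> bool" where
  "is_cycle inc S u p \<longleftrightarrow> p \<noteq> [] \<and> is_walk inc S u p u \<and>
     distinct (map (\<lambda>s. fst (snd s)) p) \<and> distinct (map (\<lambda>s. snd (snd s)) p)"

definition forest :: "('e \<Rightarrow> 'v set) \<Rightarrow> 'e set \<Rightarrow> bool" where
  "forest inc F \<longleftrightarrow> \<not> (\<exists>u p. is_cycle inc F u p)"

definition max_spanning_forest :: "'e set \<Rightarrow> ('e \<Rightarrow> 'v set) \<Rightarrow> 'e set \<Rightarrow> bool" where
  "max_spanning_forest E inc F \<longleftrightarrow> F \<subseteq> E \<and> forest inc F \<and>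
     (\<forall>e\<in>E - F. \<not> forest inc (insert e F))"

definition component :: "('e \<Rightarrow> 'v set) \<Rightarrow> 'e set \<Rightarrow> 'v \<Rightarrow> 'v set" where
  "component inc S v = {w. \<exists>p. is_walk inc S v p w}"

(* Coefficient <x_i, e_j> of the fundamental cut vector x_i (e_i \<in> F):
   K1 = component of the tail of e_i in F - e_i, K2 = component of its head. *)
definition cut_coeff :: "'e set \<Rightarrow> ('e \<Rightarrow> 'v set) \<Rightarrow> 'e set \<Rightarrow> ('e \<Rightarrow> 'v \<times> 'v) \<Rightarrow> 'e \<Rightarrow> 'e \<Rightarrow> int" where
  "cut_coeff E inc F Or i j =
     (let K1 = component inc (F - {i}) (fst (Or i));
          K2 = component inc (F - {i}) (snd (Or i))
      in if j \<in> E \<and> ((fst (Or j) \<in> K1 \<and> snd (Or j) \<in> K2) \<or> (fst (Or j) \<in> K2 \<and> snd (Or j) \<in> K1))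
         then (if fst (Or j) \<in> K1 then 1 else -1) else 0)"

(* Coefficient <x_i, e_j> of the fundamental cycle vector x_i (e_i \<notin> F): the unique
   cycle in F + e_i, traversed as e_i (tail to head) followed by the unique F-path
   from the head of e_i back to its tail. *)
definition cycle_coeff :: "('e \<Rightarrow> 'v set) \<Rightarrow> 'e set \<Rightarrow> ('e \<Rightarrow> 'v \<times> 'v) \<Rightarrow> 'e \<Rightarrow> 'e \<Rightarrow> int" where
  "cycle_coeff inc F Or i j =
     (let C = (fst (Or i), i, snd (Or i)) # (THE p. is_path inc F (snd (Or i)) p (fst (Or i)))
      in if (fst (Or j), j, snd (Or j)) \<in> set C then 1
         else if (snd (Or j), j, fst (Or j)) \<in> set C then -1 else 0)"

end

theory Submission
  imports Defs
begin

text \<open>Take a normal rooted spanning forest: one in which the two ends of every edge are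
  comparable in the ancestor order. A rooted forest of maximal total depth is normal, since an
  edge between incomparable vertices would let one subtree be hung deeper. Let \<open>F\<close> be its
  tree edges and orient every edge from ancestor to descendant. The fundamental cut of the
  tree edge above \<open>c\<close> separates the subtree of \<open>c\<close> from the rest, and no edge leads from a
  subtree to a vertex outside it, so all cut coefficients are 0 or 1. After reversing the
  non-tree edges, every fundamental cycle (a non-tree edge up, then the tree path down) runs
  along the orientation of all its edges, so all cycle coefficients are 0 or 1 as well.\<close>

abbreviation walk_vertices :: "('v \<times> 'e \<times> 'v) list \<Rightarrow> 'v list" where
  "walk_vertices p \<equiv> map (\<lambda>s. snd (snd s)) p"

abbreviation walk_edges :: "('v \<times> 'e \<times> 'v) list \<Rightarrow> 'e list" where
  "walk_edges p \<equiv> map (\<lambda>s. fst (snd s)) p"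

lemma walk_append:
  "is_walk inc S u (p @ q) w \<longleftrightarrow> (\<exists>m. is_walk inc S u p m \<and> is_walk inc S m q w)"
  by (induction p arbitrary: u) auto

lemma walk_mono:
  "is_walk inc S u p w \<Longrightarrow> \<forall>s\<in>set p. fst (snd s) \<in> S' \<Longrightarrow> is_walk inc S' u p w"
  by (induction p arbitrary: u) auto

lemma walk_step_mem:
  "is_walk inc S u p w \<Longrightarrow> (a, e, b) \<in> set p \<Longrightarrow>
    a \<in> insert u (set (walk_vertices p)) \<and> b \<in> set (walk_vertices p) \<and> e \<in> S \<and> inc e = {a, b}"
  by (induction p arbitrary: u) fastforce+

lemma walk_end_mem:
  "is_walk inc S u p w \<Longrightarrow> p \<noteq> [] \<Longrightarrow> w \<in> set (walk_vertices p)"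
proof (induction p arbitrary: u)
  case (Cons s p) then show ?case by (cases s; cases p) auto
qed simp

lemma closed_walk_rotate:
  assumes "is_walk inc S u (p @ (a, e, b) # q) u"
  shows "is_walk inc S a ((a, e, b) # q @ p) a"
  using assms by (auto simp: walk_append)

definition rooted_forest ::
    "'v set \<Rightarrow> 'e set \<Rightarrow> ('e \<Rightarrow> 'v set) \<Rightarrow> ('v \<Rightarrow> nat) \<Rightarrow> ('v \<Rightarrow> 'v) \<Rightarrow> ('v \<Rightarrow> 'e) \<Rightarrow> bool" where
  "rooted_forest V E inc dep par t \<longleftrightarrow>
     (\<forall>v\<in>V. 0 < dep v \<longrightarrow> par v \<in> V \<and> Suc (dep (par v)) = dep v \<and> t v \<in> E \<and> inc (t v) = {v, par v})"

definition descendants :: "'v set \<Rightarrow> ('v \<Rightarrow> nat) \<Rightarrow> ('v \<Rightarrow> 'v) \<Rightarrow> 'v \<Rightarrow> 'v set" where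
  "descendants V dep par c = {w\<in>V. \<exists>n\<le>dep w. (par^^n) w = c}"

lemma rooted_forest_parent:
  "rooted_forest V E inc dep par t \<Longrightarrow> v \<in> V \<Longrightarrow> 0 < dep v \<Longrightarrow>
     par v \<in> V \<and> Suc (dep (par v)) = dep v \<and> t v \<in> E \<and> inc (t v) = {v, par v}"
  by (simp add: rooted_forest_def)

lemma rooted_forest_ancestor:
  assumes rf: "rooted_forest V E inc dep par t" and v: "v \<in> V"
  shows "n \<le> dep v \<Longrightarrow> (par^^n) v \<in> V \<and> dep ((par^^n) v) = dep v - n"
proof (induction n)
  case (Suc n)
  then have "(par^^n) v \<in> V" "0 < dep ((par^^n) v)" "dep ((par^^n) v) = dep v - n" by auto
  with rooted_forest_parent[OF rf] show ?case by fastforce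
qed (use v in simp)

lemma descendants_refl: "c \<in> V \<Longrightarrow> c \<in> descendants V dep par c"
  by (auto simp: descendants_def intro: exI[of _ 0])

lemma descendants_iff_parent:
  assumes rf: "rooted_forest V E inc dep par t" and w: "w \<in> V" "0 < dep w"
  shows "w \<in> descendants V dep par c \<longleftrightarrow> w = c \<or> par w \<in> descendants V dep par c"
proof -
  have pw: "par w \<in> V" "Suc (dep (par w)) = dep w" using rooted_forest_parent[OF rf w] by auto
  have "(\<exists>n\<le>dep w. (par^^n) w = c) \<longleftrightarrow> w = c \<or> (\<exists>m\<le>dep (par w). (par^^m) (par w) = c)"
  proof
    assume "\<exists>n\<le>dep w. (par^^n) w = c"
    then obtain n where n: "n \<le> dep w" "(par^^n) w = c" by blast
    show "w = c \<or> (\<exists>m\<le>dep (par w). (par^^m) (par w) = c)"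
    proof (cases n)
      case (Suc m)
      with n pw have "m \<le> dep (par w)" "(par^^m) (par w) = c" by (auto simp: funpow_swap1)
      then show ?thesis by blast
    qed (use n in simp)
  next
    assume "w = c \<or> (\<exists>m\<le>dep (par w). (par^^m) (par w) = c)"
    then show "\<exists>n\<le>dep w. (par^^n) w = c"
    proof
      assume "\<exists>m\<le>dep (par w). (par^^m) (par w) = c"
      then obtain m where "m \<le> dep (par w)" "(par^^m) (par w) = c" by blast
      with pw show ?thesis by (intro exI[of _ "Suc m"]) (simp add: funpow_swap1)
    qed (intro exI[of _ 0], simp)
  qed
  with w pw show ?thesis by (simp add: descendants_def)
qed

lemma descendants_depth:
  assumes rf: "rooted_forest V E inc dep par t" and "w \<in> descendants V dep par c"
  shows "w \<in> V \<and> c \<in> V \<and> dep c \<le> dep w \<and> (dep w = dep c \<longrightarrow> w = c)"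
proof -
  obtain n where n: "w \<in> V" "n \<le> dep w" "(par^^n) w = c"
    using assms(2) by (auto simp: descendants_def)
  with rooted_forest_ancestor[OF rf n(1,2)] show ?thesis by (cases "n = 0") auto
qed

lemma descendants_trans:
  assumes rf: "rooted_forest V E inc dep par t"
    and "b \<in> descendants V dep par a" "a \<in> descendants V dep par c"
  shows "b \<in> descendants V dep par c"
proof -
  obtain n where n: "b \<in> V" "n \<le> dep b" "(par^^n) b = a"
    using assms(2) by (auto simp: descendants_def)
  obtain m where m: "m \<le> dep a" "(par^^m) a = c"
    using assms(3) by (auto simp: descendants_def)
  have "dep a = dep b - n" using rooted_forest_ancestor[OF rf n(1,2)] n(3) by simp
  with n m have "m + n \<le> dep b" "(par^^(m + n)) b = c" by (auto simp: funpow_add)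
  with n(1) show ?thesis by (auto simp: descendants_def)
qed

lemma common_descendant_same_depth:
  assumes rf: "rooted_forest V E inc dep par t"
    and "y \<in> descendants V dep par b" "y \<in> descendants V dep par b'" "dep b = dep b'"
  shows "b = b'"
proof -
  obtain n where n: "y \<in> V" "n \<le> dep y" "(par^^n) y = b"
    using assms(2) by (auto simp: descendants_def)
  obtain m where m: "m \<le> dep y" "(par^^m) y = b'"
    using assms(3) by (auto simp: descendants_def)
  have "dep b = dep y - n" "dep b' = dep y - m"
    using rooted_forest_ancestor[OF rf n(1)] n m by auto
  with assms(4) n m have "n = m" by simp
  with n m show ?thesis by simp
qed

lemma rooted_forest_depth_less_card:
  assumes rf: "rooted_forest V E inc dep par t" and "finite V" and v: "v \<in> V"
  shows "dep v < card V"
proof -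
  have "inj_on (\<lambda>n. (par^^n) v) {0..dep v}"
  proof (rule inj_onI)
    fix a b assume "a \<in> {0..dep v}" "b \<in> {0..dep v}" "(par^^a) v = (par^^b) v"
    with rooted_forest_ancestor[OF rf v, of a] rooted_forest_ancestor[OF rf v, of b]
    show "a = b" by auto
  qed
  moreover have "(\<lambda>n. (par^^n) v) ` {0..dep v} \<subseteq> V"
    using rooted_forest_ancestor[OF rf v] by auto
  ultimately have "card {0..dep v} \<le> card V" using card_inj_on_le \<open>finite V\<close> by blast
  then show ?thesis by simp
qed

text \<open>If an edge \<open>xy\<close> joins two incomparable vertices with \<open>y\<close> not deeper than \<open>x\<close>,
  hanging the subtree of \<open>y\<close> below \<open>x\<close> strictly increases the total depth.\<close>

lemma rooted_forest_reattach:
  assumes rf: "rooted_forest V E inc dep par t" and "finite V"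
    and e: "e \<in> E" "inc e = {x, y}" "x \<in> V" "y \<in> V"
    and x_notin: "x \<notin> descendants V dep par y" and le: "dep y \<le> dep x"
  shows "\<exists>dep' par' t'. rooted_forest V E inc dep' par' t' \<and> (\<Sum>v\<in>V. dep v) < (\<Sum>v\<in>V. dep' v)"
proof -
  define D where "D = descendants V dep par y"
  define dep' where "dep' = (\<lambda>w. if w \<in> D then dep w + (Suc (dep x) - dep y) else dep w)"
  have yD: "y \<in> D" using descendants_refl e by (simp add: D_def)
  have "rooted_forest V E inc dep' (par(y := x)) (t(y := e))"
    unfolding rooted_forest_def
  proof (intro ballI impI)
    fix w assume w: "w \<in> V" "0 < dep' w"
    show "(par(y := x)) w \<in> V \<and> Suc (dep' ((par(y := x)) w)) = dep' w \<and>
          (t(y := e)) w \<in> E \<and> inc ((t(y := e)) w) = {w, (par(y := x)) w}"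
    proof (cases "w = y")
      case True
      with x_notin e yD le show ?thesis by (auto simp: dep'_def D_def)
    next
      case False
      have dw: "0 < dep w"
      proof (cases "w \<in> D")
        case True
        with False descendants_depth[OF rf, of w y] show ?thesis by (auto simp: D_def)
      qed (use w in \<open>simp add: dep'_def\<close>)
      then have "w \<in> D \<longleftrightarrow> par w \<in> D"
        using descendants_iff_parent[OF rf w(1) dw, of y] False by (simp add: D_def)
      with rooted_forest_parent[OF rf w(1) dw] False show ?thesis by (auto simp: dep'_def)
    qed
  qed
  moreover have "(\<Sum>v\<in>V. dep v) < (\<Sum>v\<in>V. dep' v)"
    by (rule sum_strict_mono_ex1[OF \<open>finite V\<close>]) (use yD e le in \<open>auto simp: dep'_def\<close>)
  ultimately show ?thesis by blast
qed

locale normal_rooted_forest =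
  fixes V :: "'v set" and E :: "'e set" and inc :: "'e \<Rightarrow> 'v set"
    and dep :: "'v \<Rightarrow> nat" and par :: "'v \<Rightarrow> 'v" and t :: "'v \<Rightarrow> 'e"
  assumes rooted: "rooted_forest V E inc dep par t"
    and edge_descends: "e \<in> E \<Longrightarrow> \<exists>a b. inc e = {a, b} \<and> a \<noteq> b \<and> b \<in> descendants V dep par a"

lemma normal_rooted_forest_exists:
  assumes G: "loopless_multigraph V E inc"
  shows "\<exists>dep par t. normal_rooted_forest V E inc dep par t"
proof -
  have fin: "finite V" using G by (simp add: loopless_multigraph_def)
  let ?P = "\<lambda>(dep, par, t). rooted_forest V E inc dep par t"
  let ?f = "\<lambda>(dep :: 'a \<Rightarrow> nat, par :: 'a \<Rightarrow> 'a, t :: 'a \<Rightarrow> 'b). \<Sum>v\<in>V. dep v"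
  have "?P (\<lambda>_. 0, id, undefined)" by (simp add: rooted_forest_def)
  moreover have "\<forall>s. ?P s \<longrightarrow> ?f s < Suc (card V * card V)"
  proof (intro allI impI)
    fix s assume "?P s"
    then obtain dep par t where s: "s = (dep, par, t)" "rooted_forest V E inc dep par t" by auto
    have "(\<Sum>v\<in>V. dep v) \<le> (\<Sum>v\<in>V. card V)"
      by (rule sum_mono) (use rooted_forest_depth_less_card[OF s(2) fin] in \<open>auto simp: less_imp_le\<close>)
    then show "?f s < Suc (card V * card V)" using s by simp
  qed
  ultimately obtain s where "?P s" and s_max: "\<And>s'. ?P s' \<Longrightarrow> ?f s' \<le> ?f s"
    using ex_has_greatest_nat[of ?P _ ?f] by blast
  then obtain dep par t where rf: "rooted_forest V E inc dep par t"
    and max: "\<And>dep' par' t'. rooted_forest V E inc dep' par' t' \<Longrightarrow> (\<Sum>v\<in>V. dep' v) \<le> (\<Sum>v\<in>V. dep v)"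
    by (cases s) (metis (mono_tags, lifting) case_prod_conv s_max)
  have comparable: "y \<in> descendants V dep par x \<or> x \<in> descendants V dep par y"
    if "e \<in> E" "inc e = {x, y}" "x \<in> V" "y \<in> V" "dep y \<le> dep x" for e x y
  proof (rule ccontr)
    assume "\<not> ?thesis"
    with rooted_forest_reattach[OF rf fin that(1-4)] that(5)
    obtain dep' par' t' where "rooted_forest V E inc dep' par' t'"
      "(\<Sum>v\<in>V. dep v) < (\<Sum>v\<in>V. dep' v)" by blast
    with max show False by (meson not_le)
  qed
  have "\<exists>a b. inc e = {a, b} \<and> a \<noteq> b \<and> b \<in> descendants V dep par a" if e: "e \<in> E" for e
  proof -
    obtain x y where xy: "inc e = {x, y}" "x \<noteq> y" "x \<in> V" "y \<in> V"
      using G e by (auto simp: loopless_multigraph_def card_2_iff)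
    then have "inc e = {y, x}" by auto
    with xy e comparable[of e x y] comparable[of e y x]
    have "y \<in> descendants V dep par x \<or> x \<in> descendants V dep par y"
      using nat_le_linear by blast
    with xy \<open>inc e = {y, x}\<close> show ?thesis by blast
  qed
  then have "normal_rooted_forest V E inc dep par t"
    using rf by unfold_locales
  then show ?thesis by blast
qed

fun ancestor_path :: "('v \<Rightarrow> 'v) \<Rightarrow> ('v \<Rightarrow> 'e) \<Rightarrow> 'v \<Rightarrow> nat \<Rightarrow> ('v \<times> 'e \<times> 'v) list" where
  "ancestor_path par t y 0 = []"
| "ancestor_path par t y (Suc n) = ancestor_path par t (par y) n @ [(par y, t y, y)]"

context normal_rooted_forest
begin

abbreviation D :: "'v \<Rightarrow> 'v set" where "D \<equiv> descendants V dep par"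

definition F :: "'e set" where "F = t ` {v\<in>V. 0 < dep v}"

lemmas parent = rooted_forest_parent[OF rooted]

lemma F_subset: "F \<subseteq> E"
  using parent by (auto simp: F_def)

lemma F_edge: "e \<in> F \<Longrightarrow> \<exists>v. v \<in> V \<and> 0 < dep v \<and> e = t v \<and> inc e = {v, par v}"
  using parent by (auto simp: F_def)

lemma parent_notin_descendants: "v \<in> V \<Longrightarrow> 0 < dep v \<Longrightarrow> par v \<notin> D v"
  using parent descendants_depth[OF rooted, of "par v" v] by fastforce

lemma F_edge_to_deeper_end:
  assumes "e \<in> F" "inc e = {x, y}" "dep x \<le> dep y"
  shows "e = t y"
proof -
  obtain v where v: "v \<in> V" "0 < dep v" "e = t v" "inc e = {v, par v}"
    using F_edge[OF assms(1)] by blast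
  have "{x, y} = {v, par v}" "dep (par v) < dep v"
    using assms(2) v(4) parent[OF v(1,2)] by auto
  with assms(3) v(3) show ?thesis by (auto simp: doubleton_eq_iff)
qed

lemma F_edge_ends_distinct:
  assumes "e \<in> F" "inc e = {x, y}"
  shows "x \<noteq> y"
proof -
  obtain v where v: "v \<in> V" "0 < dep v" "inc e = {v, par v}"
    using F_edge[OF assms(1)] by blast
  have "{x, y} = {v, par v}" "dep (par v) < dep v"
    using assms(2) v(3) parent[OF v(1,2)] by auto
  then show ?thesis by (auto simp: doubleton_eq_iff)
qed

lemma t_inj_on: "inj_on t {v\<in>V. 0 < dep v}"
proof (rule inj_onI)
  fix v w assume v: "v \<in> {v\<in>V. 0 < dep v}" and w: "w \<in> {v\<in>V. 0 < dep v}" and "t v = t w"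
  then have "{v, par v} = {w, par w}" "dep (par v) < dep v" "dep (par w) < dep w"
    using parent[of v] parent[of w] by auto
  then show "v = w" by (auto simp: doubleton_eq_iff)
qed

text \<open>A deepest vertex of a cycle in \<open>F\<close> would be entered and left by its parent edge.\<close>

lemma forest_F: "forest inc F"
  unfolding forest_def
proof (intro notI, elim exE)
  fix u p assume "is_cycle inc F u p"
  then have ne: "p \<noteq> []" and closed: "is_walk inc F u p u" and dist: "distinct (walk_edges p)"
    by (auto simp: is_cycle_def)
  define M where "M = Max (dep ` set (walk_vertices p))"
  have le_M: "\<And>v. v \<in> set (walk_vertices p) \<Longrightarrow> dep v \<le> M"
    unfolding M_def by (rule Max_ge) auto
  have "M \<in> dep ` set (walk_vertices p)"
    unfolding M_def by (rule Max_in) (use ne in auto)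
  then obtain a e b where s: "(a, e, b) \<in> set p" and b: "dep b = M" by auto
  then obtain p1 p2 where p: "p = p1 @ (a, e, b) # p2" by (metis split_list)
  define r where "r = p2 @ p1"
  have rot: "is_walk inc F a ((a, e, b) # r) a"
    using closed_walk_rotate[of inc F u p1 a e b p2] closed p by (simp add: r_def)
  have vertices: "set (walk_vertices ((a, e, b) # r)) = set (walk_vertices p)"
    by (auto simp: p r_def)
  have dist_rot: "distinct (walk_edges ((a, e, b) # r))"
    using dist by (auto simp: p r_def)
  have "a \<in> set (walk_vertices p)"
    using walk_end_mem[OF rot] vertices by auto
  moreover have "e \<in> F" "inc e = {a, b}" using walk_step_mem[OF closed s] by auto
  ultimately have e: "e = t b"
    using F_edge_to_deeper_end le_M b by blast
  show False
  proof (cases r)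
    case Nil
    with rot s walk_step_mem[OF closed s] F_edge_ends_distinct show False by auto
  next
    case (Cons s' r')
    then obtain e' c where r: "r = (b, e', c) # r'"
      using rot by (cases s') auto
    have "c \<in> set (walk_vertices p)" using vertices r by auto
    then have "dep c \<le> dep b" using le_M b by blast
    moreover have "e' \<in> F" "inc e' = {c, b}" using rot r by auto
    ultimately have "e' = t b" using F_edge_to_deeper_end by blast
    with e dist_rot r show False by simp
  qed
qed

definition descending :: "('v \<times> 'e \<times> 'v) list \<Rightarrow> bool" where
  "descending p \<longleftrightarrow> (\<forall>(a, e, b)\<in>set p. b \<in> V \<and> 0 < dep b \<and> e = t b \<and> a = par b)"

lemma descending_Cons [simp]:
  "descending ((a, e, b) # p) \<longleftrightarrow> b \<in> V \<and> 0 < dep b \<and> e = t b \<and> a = par b \<and> descending p"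
  by (auto simp: descending_def)

lemma descending_append [simp]: "descending (p @ q) \<longleftrightarrow> descending p \<and> descending q"
  unfolding descending_def by (simp add: ball_Un)

lemma descending_Nil [simp]: "descending []"
  by (simp add: descending_def)

lemma ancestor_path_walk:
  assumes "y \<in> V" "n \<le> dep y"
  shows "is_walk inc F ((par^^n) y) (ancestor_path par t y n) y \<and> descending (ancestor_path par t y n) \<and>
    (\<forall>v\<in>set (walk_vertices (ancestor_path par t y n)). dep y - n < dep v \<and> dep v \<le> dep y) \<and>
    distinct (walk_vertices (ancestor_path par t y n))"
  using assms
proof (induction n arbitrary: y)
  case (Suc n)
  then have "0 < dep y" by simp
  with Suc.prems parent have "par y \<in> V" "Suc (dep (par y)) = dep y" "t y \<in> F" "inc (t y) = {par y, y}"
    by (auto simp: F_def)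
  with Suc show ?case by (fastforce simp: walk_append funpow_swap1)
qed simp

lemma path_to_descendant_exists:
  assumes "y \<in> D x"
  obtains p where "is_path inc F x p y" "descending p"
proof -
  obtain n where n: "y \<in> V" "n \<le> dep y" "(par^^n) y = x"
    using assms by (auto simp: descendants_def)
  then have "dep x = dep y - n" using rooted_forest_ancestor[OF rooted n(1,2)] by simp
  with ancestor_path_walk[OF n(1,2)] n(3) have "is_path inc F x (ancestor_path par t y n) y"
    by (auto simp: is_path_def)
  with ancestor_path_walk[OF n(1,2)] that show ?thesis by blast
qed

lemma descending_walk_edges:
  "descending p \<Longrightarrow> walk_edges p = map t (walk_vertices p)"
  unfolding map_map by (rule map_cong) (auto simp: descending_def)

lemma descending_walk_edges_in_F: "descending p \<Longrightarrow> set (walk_edges p) \<subseteq> F"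
  by (auto simp: descending_def F_def)

lemma descending_distinct_edges:
  assumes "descending p" "distinct (walk_vertices p)"
  shows "distinct (walk_edges p)"
proof -
  have "inj_on t (set (walk_vertices p))"
    using assms(1) by (intro inj_on_subset[OF t_inj_on]) (auto simp: descending_def)
  with assms(2) have "distinct (map t (walk_vertices p))"
    by (rule distinct_map[THEN iffD2, OF conjI])
  with assms(1) show ?thesis by (simp only: descending_walk_edges)
qed

text \<open>Normality: every edge outside \<open>F\<close> closes a cycle with the tree path to its lower end.\<close>

lemma F_maximal:
  assumes e: "e \<in> E - F"
  shows "\<not> forest inc (insert e F)"
proof -
  obtain a b where ab: "inc e = {a, b}" "a \<noteq> b" "b \<in> D a"
    using edge_descends e by blast
  obtain P where P: "is_path inc F a P b" "descending P"
    using path_to_descendant_exists[OF ab(3)] by blast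
  have edges: "set (walk_edges P) \<subseteq> F"
    using descending_walk_edges_in_F[OF P(2)] .
  have "is_walk inc (insert e F) a P b"
    using P(1) edges by (auto simp: is_path_def intro: walk_mono)
  moreover have "distinct (walk_edges P)" "distinct (a # walk_vertices P)"
    using descending_distinct_edges[OF P(2)] P(1) by (auto simp: is_path_def)
  moreover have "inc e = {b, a}" "e \<notin> set (walk_edges P)"
    using ab e edges by auto
  ultimately have "is_cycle inc (insert e F) b ((b, e, a) # P)"
    by (simp add: is_cycle_def)
  then show ?thesis by (auto simp: forest_def)
qed

lemma walk_avoiding_parent_edge:
  assumes c: "c \<in> V" "0 < dep c"
  shows "is_walk inc (F - {t c}) u p w \<Longrightarrow> u \<in> D c \<longleftrightarrow> w \<in> D c"
proof (induction p arbitrary: u)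
  case (Cons s p)
  obtain x e y where s: "s = (x, e, y)" by (cases s)
  with Cons.prems have h: "x = u" "e \<in> F" "e \<noteq> t c" "inc e = {x, y}" "is_walk inc (F - {t c}) y p w"
    by auto
  obtain v where v: "v \<in> V" "0 < dep v" "e = t v" "inc e = {v, par v}"
    using F_edge[OF h(2)] by blast
  have "v \<noteq> c" using v h(3) by auto
  then have "v \<in> D c \<longleftrightarrow> par v \<in> D c" using descendants_iff_parent[OF rooted v(1,2)] by simp
  with h(4) v(4) have "x \<in> D c \<longleftrightarrow> y \<in> D c" by (auto simp: doubleton_eq_iff)
  with Cons.IH[OF h(5)] h(1) show ?case by simp
qed simp

lemma walk_across_parent_edge:
  assumes c: "c \<in> V" "0 < dep c" and w: "is_walk inc F s p w" and "(s \<in> D c) \<noteq> (w \<in> D c)"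
  shows "c \<in> insert s (set (walk_vertices p)) \<and> par c \<in> insert s (set (walk_vertices p))"
proof -
  have "\<exists>st\<in>set p. fst (snd st) = t c"
  proof (rule ccontr)
    assume "\<not> ?thesis"
    then have "\<forall>st\<in>set p. fst (snd st) \<in> F - {t c}"
      using walk_step_mem[OF w] by fastforce
    with walk_avoiding_parent_edge[OF c] walk_mono[OF w] assms(4) show False by blast
  qed
  then obtain x y where st: "(x, t c, y) \<in> set p" by force
  from walk_step_mem[OF w st] parent[OF c] show ?thesis by (auto simp: doubleton_eq_iff)
qed

lemma path_to_descendant_first_step:
  assumes p: "is_path inc F x ((x', e, b) # p') y" and y: "y \<in> D x"
  shows "b \<in> V \<and> 0 < dep b \<and> e = t b \<and> x = par b \<and> y \<in> D b \<and> is_path inc F b p' y"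
proof -
  have h: "e \<in> F" "inc e = {x, b}" "is_walk inc F b p' y"
    and dist: "distinct (x # b # walk_vertices p')"
    using p by (auto simp: is_path_def)
  obtain v where v: "v \<in> V" "0 < dep v" "e = t v" "inc e = {v, par v}"
    using F_edge[OF h(1)] by blast
  have "x \<noteq> b" using dist by simp
  with h(2) v(4) consider "v = x" "par v = b" | "v = b" "par v = x"
    by (auto simp: doubleton_eq_iff)
  then show ?thesis
  proof cases
    case 1
    with parent_notin_descendants[OF v(1,2)] y
    have "v \<in> insert b (set (walk_vertices p'))" using walk_across_parent_edge[OF v(1,2) h(3)] by blast
    with 1 dist show ?thesis by auto
  next
    case 2
    have "y \<in> D b"
    proof (rule ccontr)
      assume "y \<notin> D b"
      with 2 v descendants_refl[of b V dep par]
      have "par b \<in> insert b (set (walk_vertices p'))"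
        using walk_across_parent_edge[OF _ _ h(3)] by blast
      with 2 dist show False by auto
    qed
    with 2 v h(3) dist show ?thesis by (simp add: is_path_def)
  qed
qed

lemma path_to_descendant_descending:
  "is_path inc F x p y \<Longrightarrow> y \<in> D x \<Longrightarrow> descending p"
proof (induction p arbitrary: x)
  case (Cons s p)
  obtain x' e b where s: "s = (x', e, b)" by (cases s)
  with path_to_descendant_first_step[OF Cons.prems(1)[unfolded s] Cons.prems(2)] Cons.IH[of b]
    Cons.prems(1) show ?case by (auto simp: is_path_def)
qed simp

lemma path_to_descendant_unique:
  "is_path inc F x p y \<Longrightarrow> is_path inc F x q y \<Longrightarrow> y \<in> D x \<Longrightarrow> p = q"
proof (induction p arbitrary: x q)
  case Nil
  then have "x = y" by (simp add: is_path_def)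
  with Nil.prems walk_end_mem[of inc F x q y] show ?case by (cases q) (auto simp: is_path_def)
next
  case (Cons s p)
  obtain x' e b where s: "s = (x', e, b)" by (cases s)
  have "y \<in> set (walk_vertices (s # p))"
    using walk_end_mem[of inc F x "s # p" y] Cons.prems by (simp add: is_path_def)
  then have "x \<noteq> y" using Cons.prems(1) by (auto simp: is_path_def)
  then obtain x'' e' b' q' where q: "q = (x'', e', b') # q'"
    using Cons.prems(2) by (cases q) (auto simp: is_path_def)
  note first = path_to_descendant_first_step[OF Cons.prems(1)[unfolded s] Cons.prems(3)]
  note first' = path_to_descendant_first_step[OF Cons.prems(2)[unfolded q] Cons.prems(3)]
  have "dep b = dep b'" using first first' parent[of b] parent[of b'] by auto
  then have "b = b'" using common_descendant_same_depth[OF rooted, of y b b'] first first' by simp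
  with Cons.IH[of b q'] first first' Cons.prems(1,2) s q show ?case by (auto simp: is_path_def)
qed

lemma descending_the_path_to_descendant:
  assumes "y \<in> D x"
  shows "descending (THE p. is_path inc F x p y)"
proof -
  obtain P where P: "is_path inc F x P y" "descending P"
    using path_to_descendant_exists[OF assms] by blast
  then have "(THE p. is_path inc F x p y) = P"
    using path_to_descendant_unique[OF _ P(1) assms] by (intro the_equality) blast+
  with P show ?thesis by simp
qed

definition ancestral_orientation :: "'e \<Rightarrow> 'v \<times> 'v" where
  "ancestral_orientation e = (SOME (a, b). inc e = {a, b} \<and> a \<noteq> b \<and> b \<in> D a)"

definition cotree_reversed_orientation :: "'e \<Rightarrow> 'v \<times> 'v" where
  "cotree_reversed_orientation e =
     (if e \<in> F then ancestral_orientation e else prod.swap (ancestral_orientation e))"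

lemma ancestral_orientationE:
  assumes "e \<in> E"
  obtains a b where "ancestral_orientation e = (a, b)" "inc e = {a, b}" "a \<noteq> b" "b \<in> D a"
proof -
  have "\<exists>ab. case ab of (a, b) \<Rightarrow> inc e = {a, b} \<and> a \<noteq> b \<and> b \<in> D a"
    using edge_descends[OF assms] by auto
  then have "case ancestral_orientation e of (a, b) \<Rightarrow> inc e = {a, b} \<and> a \<noteq> b \<and> b \<in> D a"
    unfolding ancestral_orientation_def by (rule someI_ex)
  with that show ?thesis by (auto split: prod.splits)
qed

lemma ancestral_orientation_parent_edge:
  assumes v: "v \<in> V" "0 < dep v"
  shows "ancestral_orientation (t v) = (par v, v)"
proof -
  have tv: "t v \<in> E" "inc (t v) = {v, par v}" using parent[OF v] by auto
  obtain a b where ab: "ancestral_orientation (t v) = (a, b)" "inc (t v) = {a, b}" "a \<noteq> b" "b \<in> D a"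
    using tv(1) by (rule ancestral_orientationE)
  have "a = par v \<and> b = v"
  proof (rule ccontr)
    assume "\<not> ?thesis"
    with ab(2) tv(2) have "a = v" "b = par v" by (auto simp: doubleton_eq_iff)
    with ab(4) parent_notin_descendants[OF v] show False by simp
  qed
  with ab(1) show ?thesis by simp
qed

lemma orientation_ancestral: "orientation E inc ancestral_orientation"
  unfolding orientation_def
proof
  fix e assume "e \<in> E"
  then obtain a b where "ancestral_orientation e = (a, b)" "inc e = {a, b}"
    by (rule ancestral_orientationE)
  then show "inc e = {fst (ancestral_orientation e), snd (ancestral_orientation e)}" by simp
qed

lemma orientation_cotree_reversed: "orientation E inc cotree_reversed_orientation"
  unfolding orientation_def
proof
  fix e assume "e \<in> E"
  then obtain a b where "ancestral_orientation e = (a, b)" "inc e = {a, b}"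
    by (rule ancestral_orientationE)
  moreover have "{a, b} = {b, a}" by blast
  ultimately show "inc e = {fst (cotree_reversed_orientation e), snd (cotree_reversed_orientation e)}"
    by (simp add: cotree_reversed_orientation_def)
qed

lemma cut_coeff_ancestral:
  assumes i: "i \<in> F" and j: "j \<in> E"
  shows "cut_coeff E inc F ancestral_orientation i j \<in> {0, 1}"
proof -
  obtain c where c: "c \<in> V" "0 < dep c" "i = t c"
    using F_edge[OF i] by blast
  have in_D_iff: "x \<in> component inc (F - {i}) z \<Longrightarrow> x \<in> D c \<longleftrightarrow> z \<in> D c" for x z
    using walk_avoiding_parent_edge[OF c(1,2)] c(3) by (auto simp: component_def)
  define K1 where "K1 = component inc (F - {i}) (par c)"
  define K2 where "K2 = component inc (F - {i}) c"
  have K1: "x \<notin> D c" if "x \<in> K1" for x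
    using in_D_iff[OF that[unfolded K1_def]] parent_notin_descendants[OF c(1,2)] by blast
  have K2: "x \<in> D c" if "x \<in> K2" for x
    using in_D_iff[OF that[unfolded K2_def]] descendants_refl[OF c(1)] by blast
  obtain a b where ab: "ancestral_orientation j = (a, b)" "b \<in> D a"
    using ancestral_orientationE[OF j] by blast
  have "b \<in> D c" if "a \<in> K2"
    using descendants_trans[OF rooted ab(2) K2[OF that]] .
  with K1 have "\<not> (a \<in> K2 \<and> b \<in> K1)" by blast
  then have "\<not> (fst (ancestral_orientation j) \<in> K2 \<and> snd (ancestral_orientation j) \<in> K1)"
    using ab(1) by simp
  moreover have "ancestral_orientation i = (par c, c)"
    using ancestral_orientation_parent_edge[OF c(1,2)] c(3) by simp
  ultimately show ?thesis
    unfolding cut_coeff_def Let_def K1_def K2_def by auto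
qed

lemma cycle_coeff_cotree_reversed:
  assumes i: "i \<in> E - F" and j: "j \<in> E"
  shows "cycle_coeff inc F cotree_reversed_orientation i j \<in> {0, 1}"
proof -
  obtain a b where ab: "ancestral_orientation i = (a, b)" "b \<in> D a"
    using i by (auto elim: ancestral_orientationE)
  then have rev: "cotree_reversed_orientation i = (b, a)"
    using i by (simp add: cotree_reversed_orientation_def)
  define P where "P = (THE p. is_path inc F a p b)"
  have P: "descending P" using descending_the_path_to_descendant[OF ab(2)] by (simp add: P_def)
  define C where "C = (b, i, a) # P"
  have consistent: "cotree_reversed_orientation e = (x, y)" if "(x, e, y) \<in> set C" for x e y
  proof (cases "(x, e, y) = (b, i, a)")
    case False
    with that P have y: "y \<in> V" "0 < dep y" and "e = t y" "x = par y"
      by (auto simp: C_def descending_def)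
    moreover have "t y \<in> F" using y by (auto simp: F_def)
    ultimately show ?thesis
      using ancestral_orientation_parent_edge[OF y] by (simp add: cotree_reversed_orientation_def)
  qed (use rev in simp)
  obtain x y where xy: "cotree_reversed_orientation j = (x, y)" by (metis surj_pair)
  have "(x, j, y) \<in> set C" if "(y, j, x) \<in> set C"
  proof -
    have "y = x" using consistent[OF that] xy by (metis prod.inject)
    with that show ?thesis by simp
  qed
  moreover have "(fst (cotree_reversed_orientation i), i, snd (cotree_reversed_orientation i)) #
      (THE p. is_path inc F (snd (cotree_reversed_orientation i)) p (fst (cotree_reversed_orientation i))) = C"
    by (simp add: rev C_def P_def)
  ultimately show ?thesis
    unfolding cycle_coeff_def Let_def xy by auto
qed

end

theorem lemma3p2:
  fixes V :: "'v set" and E :: "'e set" and inc :: "'e \<Rightarrow> 'v set"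
  assumes "loopless_multigraph V E inc"
  shows "\<exists>F. max_spanning_forest E inc F \<and>
           (\<exists>Or1. orientation E inc Or1 \<and>
              (\<forall>i\<in>F. \<forall>j\<in>E. cut_coeff E inc F Or1 i j \<in> {0, 1})) \<and>
           (\<exists>Or2. orientation E inc Or2 \<and>
              (\<forall>i\<in>E - F. \<forall>j\<in>E. cycle_coeff inc F Or2 i j \<in> {0, 1}))"
proof -
  obtain dep par t where "normal_rooted_forest V E inc dep par t"
    using normal_rooted_forest_exists[OF assms] by blast
  then interpret normal_rooted_forest V E inc dep par t .
  have "max_spanning_forest E inc F"
    unfolding max_spanning_forest_def using F_subset forest_F F_maximal by blast
  with orientation_ancestral cut_coeff_ancestral orientation_cotree_reversed
    cycle_coeff_cotree_reversed
  show ?thesis by blast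
qed

end
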